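(* For any unit-weight graph $G$, there is a persuasive binary signaling scheme with cost exactly $\mathsf{OPT}^{\mathsf{stable}}$.
   Context: Setting. $V$ is a finite set of $n$ task types and $W$ is a symmetric matrix with entries in $\{0,1\}$ and $W_{v,v}=1$ (the unit-weight graph $G$ has edges $\{u,v\}$, $u\ne v$, with $W_{u,v}=1$). A vector $\theta\in\mathbb{R}_{\ge0}^V$ is feasible if $W\theta\ge\mathbf 1$ coordinatewise, and stable if it is feasible and for every $v$, $\theta_v=\min\{x\ge0: x+\sum_{v'\neq v}W_{v,v'}\theta_{v'}\ge1\}$. $\mathsf{OPT}^{\mathsf{stable}}=\min\{\|\theta\|_1:\theta\text{ stable}\}$. Signaling. There are $n$ agents; the type profile $t=(t_1,\dots,t_n)$ is a uniformly random bijection $[n]\to V$. A signaling scheme with finite signal space $\Sigma\subset[0,1]$ is a map $\varphi$ assigning to each bijection $t$ a distribution $\varphi(t)$ on $\Sigma^V$; given $t$, $s\sim\varphi(t)$ is drawn and agent $i$ privately receives $s_{t_i}$. For agent $i$, a signal $\theta\in\Sigma$ with $\Pr[s_{t_i}=\theta]>0$ and $x\ge0$, let $Q_i(x\mid\theta)=\mathbb{E}\big[x+\sum_{v'\neq t_i}W_{t_i,v'}s_{v'}\,\big|\,s_{t_i}=\theta\big]$. The scheme is persuasive if for every agent $i$ and every such $\theta$: $Q_i(\theta\mid\theta)\ge1$ and $\theta=\min\{x\ge0:Q_i(x\mid\theta)\ge1\}$. Its cost is $\mathbb{E}[\|s\|_1]$. Binary means $|\Sigma|=2$. *)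

theory Defs
  imports "HOL-Probability.Probability"
begin

definition unit_weight_graph :: "'v set \<Rightarrow> ('v \<Rightarrow> 'v \<Rightarrow> real) \<Rightarrow> bool" where
  "unit_weight_graph V W \<longleftrightarrow> finite V \<and>
     (\<forall>u\<in>V. \<forall>v\<in>V. W u v \<in> {0, 1} \<and> W u v = W v u) \<and> (\<forall>v\<in>V. W v v = 1)"

definition feasible :: "'v set \<Rightarrow> ('v \<Rightarrow> 'v \<Rightarrow> real) \<Rightarrow> ('v \<Rightarrow> real) \<Rightarrow> bool" where
  "feasible V W \<theta> \<longleftrightarrow> (\<forall>v\<in>V. 0 \<le> \<theta> v) \<and> (\<forall>v\<in>V. (\<Sum>v'\<in>V. W v v' * \<theta> v') \<ge> 1)"

definition stable :: "'v set \<Rightarrow> ('v \<Rightarrow> 'v \<Rightarrow> real) \<Rightarrow> ('v \<Rightarrow> real) \<Rightarrow> bool" where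
  "stable V W \<theta> \<longleftrightarrow> feasible V W \<theta> \<and>
     (\<forall>v\<in>V. \<theta> v = (LEAST x::real. 0 \<le> x \<and> x + (\<Sum>v'\<in>V - {v}. W v v' * \<theta> v') \<ge> 1))"

definition OPT_stable :: "'v set \<Rightarrow> ('v \<Rightarrow> 'v \<Rightarrow> real) \<Rightarrow> real" where
  "OPT_stable V W = Inf {(\<Sum>v\<in>V. \<bar>\<theta> v\<bar>) | \<theta>. stable V W \<theta>}"

text \<open>Type profiles: bijections from the agents {0..<n} (n = card V) onto V,
  represented extensionally (value undefined outside the agents).\<close>
definition profiles :: "'v set \<Rightarrow> (nat \<Rightarrow> 'v) set" where
  "profiles V = {t. bij_betw t {..<card V} V \<and> t \<in> extensional {..<card V}}"

definition valid_scheme :: "'v set \<Rightarrow> real set \<Rightarrow> ((nat \<Rightarrow> 'v) \<Rightarrow> ('v \<Rightarrow> real) pmf) \<Rightarrow> bool" where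
  "valid_scheme V S \<phi> \<longleftrightarrow> finite S \<and> S \<subseteq> {0..1} \<and>
     (\<forall>t\<in>profiles V. set_pmf (\<phi> t) \<subseteq> PiE V (\<lambda>_. S))"

definition joint :: "'v set \<Rightarrow> ((nat \<Rightarrow> 'v) \<Rightarrow> ('v \<Rightarrow> real) pmf) \<Rightarrow> ((nat \<Rightarrow> 'v) \<times> ('v \<Rightarrow> real)) pmf" where
  "joint V \<phi> = pmf_of_set (profiles V) \<bind> (\<lambda>t. map_pmf (\<lambda>s. (t, s)) (\<phi> t))"

definition sig_event :: "nat \<Rightarrow> real \<Rightarrow> ((nat \<Rightarrow> 'v) \<times> ('v \<Rightarrow> real)) set" where
  "sig_event i \<theta> = {(t, s). s (t i) = \<theta>}"

definition Q :: "'v set \<Rightarrow> ('v \<Rightarrow> 'v \<Rightarrow> real) \<Rightarrow> ((nat \<Rightarrow> 'v) \<Rightarrow> ('v \<Rightarrow> real) pmf)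
                  \<Rightarrow> nat \<Rightarrow> real \<Rightarrow> real \<Rightarrow> real" where
  "Q V W \<phi> i x \<theta> = measure_pmf.expectation (cond_pmf (joint V \<phi>) (sig_event i \<theta>))
      (\<lambda>(t, s). x + (\<Sum>v'\<in>V - {t i}. W (t i) v' * s v'))"

definition persuasive :: "'v set \<Rightarrow> ('v \<Rightarrow> 'v \<Rightarrow> real) \<Rightarrow> real set
                           \<Rightarrow> ((nat \<Rightarrow> 'v) \<Rightarrow> ('v \<Rightarrow> real) pmf) \<Rightarrow> bool" where
  "persuasive V W S \<phi> \<longleftrightarrow>
     (\<forall>i<card V. \<forall>\<theta>\<in>S. measure_pmf.prob (joint V \<phi>) (sig_event i \<theta>) > 0 \<longrightarrow>
        Q V W \<phi> i \<theta> \<theta> \<ge> 1 \<and> \<theta> = (LEAST x::real. 0 \<le> x \<and> Q V W \<phi> i x \<theta> \<ge> 1))"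

definition cost :: "'v set \<Rightarrow> ((nat \<Rightarrow> 'v) \<Rightarrow> ('v \<Rightarrow> real) pmf) \<Rightarrow> real" where
  "cost V \<phi> = measure_pmf.expectation (joint V \<phi>) (\<lambda>(t, s). \<Sum>v\<in>V. \<bar>s v\<bar>)"

end

(*
  The signal ignores the type profile: draw a random independent set D and tell exactly the
  types in D to work.  A type told to work has no neighbour told to work, so its threshold is 1.
  A type told to idle expects at least one working neighbour as soon as
  E[sum_{u in D} (deg u + 1)] >= n, since for independent D counting the edges between D and its
  complement gives sum_{v notin D} (|N(v) inter D| - 1) = sum_{u in D} (deg u + 1) - n.
  The cost is E|D|.

  Such a D with E|D| = OPT_stable exists.  A stable theta satisfies
  sum_u theta_u (deg u + 1) >= n and is a fractional packing on its support, which rounds to an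
  independent set X with sum_u theta_u c_u <= sum_{u in X} c_u for any weights c >= 0.  Taking
  c = deg + 1 - t gives, for every t, an independent set X with
  n - t OPT_stable <= sum_{u in X} (deg u + 1) - t |X|, and a two-dimensional Farkas argument
  turns these bounds into a mixture of two independent sets.
*)
theory Submission
  imports Defs "HOL-Combinatorics.Transposition"
begin

section \<open>Stable profiles\<close>

definition indep_set :: "('v \<Rightarrow> 'v \<Rightarrow> real) \<Rightarrow> 'v set \<Rightarrow> bool" where
  "indep_set W X \<longleftrightarrow> (\<forall>u\<in>X. \<forall>v\<in>X. u \<noteq> v \<longrightarrow> W u v = 0)"

definition closed_degree :: "'v set \<Rightarrow> ('v \<Rightarrow> 'v \<Rightarrow> real) \<Rightarrow> 'v \<Rightarrow> real" where
  "closed_degree V W u = (\<Sum>v\<in>V. W u v)"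

lemma unit_weight_graph_finite: "unit_weight_graph V W \<Longrightarrow> finite V"
  by (simp add: unit_weight_graph_def)

lemma unit_weight_graph_sym: "unit_weight_graph V W \<Longrightarrow> u \<in> V \<Longrightarrow> v \<in> V \<Longrightarrow> W u v = W v u"
  by (simp add: unit_weight_graph_def)

lemma unit_weight_graph_01: "unit_weight_graph V W \<Longrightarrow> u \<in> V \<Longrightarrow> v \<in> V \<Longrightarrow> W u v \<in> {0, 1}"
  by (simp add: unit_weight_graph_def)

lemma unit_weight_graph_nonneg: "unit_weight_graph V W \<Longrightarrow> u \<in> V \<Longrightarrow> v \<in> V \<Longrightarrow> 0 \<le> W u v"
  using unit_weight_graph_01 by fastforce

lemma unit_weight_graph_diag: "unit_weight_graph V W \<Longrightarrow> v \<in> V \<Longrightarrow> W v v = 1"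
  by (simp add: unit_weight_graph_def)

lemma unit_weight_graph_subset: "unit_weight_graph V W \<Longrightarrow> U \<subseteq> V \<Longrightarrow> unit_weight_graph U W"
  by (auto simp: unit_weight_graph_def finite_subset)

lemma least_threshold: "(LEAST x::real. 0 \<le> x \<and> 1 \<le> x + s) = max 0 (1 - s)"
  by (rule Least_equality) auto

lemma sum_remove_diag:
  assumes "unit_weight_graph V W" "v \<in> V"
  shows "(\<Sum>u\<in>V. W v u * \<theta> u) = \<theta> v + (\<Sum>u\<in>V - {v}. W v u * \<theta> u)"
  using assms by (simp add: sum.remove unit_weight_graph_finite unit_weight_graph_diag)

lemma stable_iff:
  assumes "unit_weight_graph V W"
  shows "stable V W \<theta> \<longleftrightarrow> feasible V W \<theta> \<and>
           (\<forall>v\<in>V. 0 < \<theta> v \<longrightarrow> (\<Sum>u\<in>V. W v u * \<theta> u) = 1)"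
proof -
  have slack: "\<theta> v = max 0 (1 - (\<Sum>u\<in>V - {v}. W v u * \<theta> u))
      \<longleftrightarrow> (0 < \<theta> v \<longrightarrow> (\<Sum>u\<in>V. W v u * \<theta> u) = 1)"
    if "v \<in> V" "0 \<le> \<theta> v" "1 \<le> (\<Sum>u\<in>V. W v u * \<theta> u)" for v
    using sum_remove_diag[OF assms that(1), of \<theta>] that(2,3) by (auto simp: max_def)
  show ?thesis
    unfolding stable_def least_threshold using slack by (auto simp: feasible_def)
qed

lemma stable_feasible: "stable V W \<theta> \<Longrightarrow> feasible V W \<theta>"
  unfolding stable_def by blast

lemma stable_nonneg: "stable V W \<theta> \<Longrightarrow> v \<in> V \<Longrightarrow> 0 \<le> \<theta> v"
  using stable_feasible unfolding feasible_def by blast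

lemma card_le_stable_weighted_degree:
  assumes g: "unit_weight_graph V W" and st: "stable V W \<theta>"
  shows "real (card V) \<le> (\<Sum>u\<in>V. \<theta> u * closed_degree V W u)"
proof -
  have "real (card V) = (\<Sum>v\<in>V. 1)"
    by simp
  also have "\<dots> \<le> (\<Sum>v\<in>V. \<Sum>u\<in>V. W v u * \<theta> u)"
    using stable_feasible[OF st] by (intro sum_mono) (simp add: feasible_def)
  also have "\<dots> = (\<Sum>u\<in>V. \<Sum>v\<in>V. W v u * \<theta> u)"
    by (rule sum.swap)
  also have "\<dots> = (\<Sum>u\<in>V. \<theta> u * closed_degree V W u)"
    unfolding closed_degree_def sum_distrib_left
    using unit_weight_graph_sym[OF g] by (intro sum.cong refl) (simp add: mult.commute)
  finally show ?thesis .
qed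

lemma indep_set_empty [simp]: "indep_set W {}"
  by (simp add: indep_set_def)

lemma sum_indep_set_self:
  assumes "indep_set W X" "finite X" "v \<in> X" "W v v = 1"
  shows "(\<Sum>u\<in>X. W v u) = 1"
proof -
  have "(\<Sum>u\<in>X - {v}. W v u) = 0"
    using assms(1,3) by (intro sum.neutral) (auto simp: indep_set_def)
  then show ?thesis
    using assms(2-4) by (simp add: sum.remove)
qed

lemma exists_stable:
  assumes g: "unit_weight_graph V W"
  shows "\<exists>\<theta>. stable V W \<theta>"
proof -
  have "finite {X. X \<subseteq> V \<and> indep_set W X}"
    using unit_weight_graph_finite[OF g] by simp
  from finite_has_maximal2[OF this, of "{}"]
  obtain X where X: "X \<subseteq> V" "indep_set W X"
    and maximal: "\<And>Y. Y \<subseteq> V \<Longrightarrow> indep_set W Y \<Longrightarrow> X \<subseteq> Y \<Longrightarrow> X = Y"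
    by auto
  have finX: "finite X"
    using X(1) unit_weight_graph_finite[OF g] finite_subset by blast
  have dominating: "1 \<le> (\<Sum>u\<in>X. W v u)" if v: "v \<in> V" "v \<notin> X" for v
  proof (rule ccontr)
    assume small: "\<not> 1 \<le> (\<Sum>u\<in>X. W v u)"
    have "W v u = 0" if u: "u \<in> X" for u
    proof -
      have "W v u \<le> (\<Sum>u\<in>X. W v u)"
        using u finX X(1) v(1) unit_weight_graph_nonneg[OF g] by (intro member_le_sum) auto
      then show ?thesis
        using small unit_weight_graph_01[OF g v(1), of u] u X(1) by auto
    qed
    moreover have "W u v = 0" if "u \<in> X" for u
      using calculation[OF that] unit_weight_graph_sym[OF g v(1), of u] that X(1) by auto
    ultimately have "indep_set W (insert v X)"
      using X(2) unfolding indep_set_def by auto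
    then show False
      using maximal[of "insert v X"] X(1) v by blast
  qed
  have "stable V W (indicator X)"
    unfolding stable_iff[OF g] feasible_def
  proof (intro conjI ballI impI)
    fix v assume v: "v \<in> V"
    have "V \<inter> X = X"
      using X(1) by blast
    then have load: "(\<Sum>u\<in>V. W v u * indicator X u) = (\<Sum>u\<in>X. W v u)"
      using unit_weight_graph_finite[OF g]
        Indicator_Function.sum_mult_indicator[where f = "W v" and B = X] by simp
    show "1 \<le> (\<Sum>u\<in>V. W v u * indicator X u)"
      using load dominating[OF v] sum_indep_set_self[OF X(2) finX _ unit_weight_graph_diag[OF g v]]
      by (cases "v \<in> X") auto
    show "(\<Sum>u\<in>V. W v u * indicator X u) = 1" if "0 < (indicator X v :: real)"
      using that load sum_indep_set_self[OF X(2) finX _ unit_weight_graph_diag[OF g v]]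
      by (simp add: indicator_def split: if_splits)
  qed (simp add: indicator_def)
  then show ?thesis by blast
qed

section \<open>Rounding fractional packings to independent sets\<close>

definition non_neighbours :: "'v set \<Rightarrow> ('v \<Rightarrow> 'v \<Rightarrow> real) \<Rightarrow> 'v \<Rightarrow> 'v set" where
  "non_neighbours U W v = {u\<in>U. u \<noteq> v \<and> W v u = 0}"

lemma non_neighbours_subset: "non_neighbours U W v \<subseteq> U"
  by (auto simp: non_neighbours_def)

lemma not_in_non_neighbours: "v \<notin> non_neighbours U W v"
  by (simp add: non_neighbours_def)

lemma sum_split_non_neighbours:
  assumes g: "unit_weight_graph U W" and v: "v \<in> U"
  shows "(\<Sum>u\<in>U. f u) = (\<Sum>u\<in>U. W v u * f u) + (\<Sum>u\<in>non_neighbours U W v. f u)"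
proof -
  have "f u = W v u * f u + (if u \<in> non_neighbours U W v then f u else 0)" if "u \<in> U" for u
    using unit_weight_graph_01[OF g v that] unit_weight_graph_diag[OF g v] that
    by (auto simp: non_neighbours_def)
  then have "(\<Sum>u\<in>U. f u)
      = (\<Sum>u\<in>U. W v u * f u) + (\<Sum>u\<in>U. if u \<in> non_neighbours U W v then f u else 0)"
    by (simp add: sum.distrib[symmetric] cong: sum.cong)
  also have "(\<Sum>u\<in>U. if u \<in> non_neighbours U W v then f u else 0) = (\<Sum>u\<in>non_neighbours U W v. f u)"
    using unit_weight_graph_finite[OF g] non_neighbours_subset[of U W v]
    by (simp add: sum.inter_restrict[symmetric] inf.absorb2)
  finally show ?thesis .
qed

lemma sum_non_neighbours_swap:
  assumes g: "unit_weight_graph U W"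
  shows "(\<Sum>v\<in>U. \<Sum>u\<in>non_neighbours U W v. h v u) = (\<Sum>u\<in>U. \<Sum>v\<in>non_neighbours U W u. h v u)"
proof -
  have "{v \<in> U. u \<noteq> v \<and> W v u = 0} = non_neighbours U W u" if "u \<in> U" for u
    using unit_weight_graph_sym[OF g _ that] that by (auto simp: non_neighbours_def)
  then show ?thesis
    using sum.swap_restrict[OF unit_weight_graph_finite[OF g] unit_weight_graph_finite[OF g],
        of h "\<lambda>v u. u \<noteq> v \<and> W v u = 0"]
    by (simp add: non_neighbours_def cong: sum.cong)
qed

lemma exists_pos_weight_ge_average:
  fixes \<theta> F :: "'a \<Rightarrow> real"
  assumes "finite U" "\<forall>v\<in>U. 0 \<le> \<theta> v" "\<exists>v\<in>U. 0 < \<theta> v"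
    and "(\<Sum>v\<in>U. \<theta> v) * S \<le> (\<Sum>v\<in>U. \<theta> v * F v)"
  shows "\<exists>v\<in>U. 0 < \<theta> v \<and> S \<le> F v"
proof (rule ccontr)
  assume contra: "\<not> ?thesis"
  have "\<theta> v * F v \<le> \<theta> v * S" if "v \<in> U" for v
  proof (cases "0 < \<theta> v")
    case True
    then show ?thesis
      using contra that by (auto intro!: mult_left_mono)
  next
    case False
    then show ?thesis
      using assms(2) that by force
  qed
  moreover obtain v0 where v0: "v0 \<in> U" "0 < \<theta> v0"
    using assms(3) by blast
  then have "\<theta> v0 * F v0 < \<theta> v0 * S"
    using contra by (intro mult_strict_left_mono) auto
  ultimately have "(\<Sum>v\<in>U. \<theta> v * F v) < (\<Sum>v\<in>U. \<theta> v * S)"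
    using assms(1) v0(1) by (intro sum_strict_mono_ex1) auto
  then show False
    using assms(4) by (simp add: sum_distrib_right)
qed

lemma packing_double_counting:
  assumes g: "unit_weight_graph U W"
    and \<theta>: "\<forall>u\<in>U. 0 \<le> \<theta> u" and c: "\<forall>u\<in>U. 0 \<le> c u"
    and packing: "\<forall>v\<in>U. (\<Sum>u\<in>U. W v u * \<theta> u) \<le> 1"
  shows "(\<Sum>v\<in>U. \<theta> v) * (\<Sum>u\<in>U. \<theta> u * c u)
           \<le> (\<Sum>v\<in>U. \<theta> v * (c v + (\<Sum>u\<in>non_neighbours U W v. \<theta> u * c u)))"
proof -
  define S where "S = (\<Sum>u\<in>U. \<theta> u * c u)"
  have mass: "(\<Sum>v\<in>U. \<theta> v) - 1 \<le> (\<Sum>v\<in>non_neighbours U W u. \<theta> v)" if "u \<in> U" for u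
    using sum_split_non_neighbours[OF g that, of \<theta>] packing that by auto
  have "(\<Sum>u\<in>U. \<theta> u * c u * ((\<Sum>v\<in>U. \<theta> v) - 1)) = S * ((\<Sum>v\<in>U. \<theta> v) - 1)"
    unfolding S_def by (simp add: sum_distrib_right)
  then have "(\<Sum>v\<in>U. \<theta> v) * S = S + (\<Sum>u\<in>U. \<theta> u * c u * ((\<Sum>v\<in>U. \<theta> v) - 1))"
    by (simp add: algebra_simps)
  also have "\<dots> \<le> S + (\<Sum>u\<in>U. \<theta> u * c u * (\<Sum>v\<in>non_neighbours U W u. \<theta> v))"
    using mass \<theta> c by (intro add_left_mono sum_mono mult_left_mono) auto
  also have "\<dots> = S + (\<Sum>u\<in>U. \<Sum>v\<in>non_neighbours U W u. \<theta> v * (\<theta> u * c u))"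
    by (simp add: sum_distrib_left mult_ac)
  also have "\<dots> = S + (\<Sum>v\<in>U. \<Sum>u\<in>non_neighbours U W v. \<theta> v * (\<theta> u * c u))"
    using sum_non_neighbours_swap[OF g, of "\<lambda>v u. \<theta> v * (\<theta> u * c u)"] by simp
  also have "\<dots> = (\<Sum>v\<in>U. \<theta> v * (c v + (\<Sum>u\<in>non_neighbours U W v. \<theta> u * c u)))"
    unfolding S_def by (simp add: distrib_left sum.distrib sum_distrib_left mult_ac)
  finally show ?thesis
    unfolding S_def .
qed

lemma indep_set_insert_non_neighbour:
  assumes g: "unit_weight_graph U W" and v: "v \<in> U"
    and X: "X \<subseteq> non_neighbours U W v" "indep_set W X"
  shows "indep_set W (insert v X)"
proof -
  have "W v u = 0" "W u v = 0" if "u \<in> X" for u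
    using X(1) that unit_weight_graph_sym[OF g v, of u] by (auto simp: non_neighbours_def)
  then show ?thesis
    using X(2) unfolding indep_set_def by auto
qed

text \<open>Pick a vertex of the support whose own weight plus the packing weight of its
  non-neighbours is at least the average, and recurse on the non-neighbours.\<close>
lemma fractional_packing_rounding:
  assumes "unit_weight_graph U W"
    and "\<forall>u\<in>U. 0 \<le> \<theta> u" "\<forall>u\<in>U. 0 \<le> c u"
    and "\<forall>v\<in>U. (\<Sum>u\<in>U. W v u * \<theta> u) \<le> 1"
  shows "\<exists>X\<subseteq>U. indep_set W X \<and> (\<Sum>u\<in>U. \<theta> u * c u) \<le> (\<Sum>u\<in>X. c u)"
  using unit_weight_graph_finite[OF assms(1)] assms
proof (induction U rule: finite_psubset_induct)
  case (psubset U)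
  note g = psubset.prems(1) and \<theta> = psubset.prems(2) and c = psubset.prems(3)
    and packing = psubset.prems(4)
  show ?case
  proof (cases "\<exists>v\<in>U. 0 < \<theta> v")
    case False
    then have "(\<Sum>u\<in>U. \<theta> u * c u) = 0"
      using \<theta> by (intro sum.neutral) force
    then show ?thesis
      by (intro exI[of _ "{}"]) simp
  next
    case True
    define N where "N v = non_neighbours U W v" for v
    obtain v where v: "v \<in> U" "0 < \<theta> v"
      and above_average: "(\<Sum>u\<in>U. \<theta> u * c u) \<le> c v + (\<Sum>u\<in>N v. \<theta> u * c u)"
      using exists_pos_weight_ge_average[OF psubset.hyps(1) \<theta> True
          packing_double_counting[OF g \<theta> c packing]]
      unfolding N_def by blast
    have "N v \<subset> U"
      using v(1) non_neighbours_subset not_in_non_neighbours unfolding N_def by fast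
    moreover have "\<forall>w\<in>N v. (\<Sum>u\<in>N v. W w u * \<theta> u) \<le> 1"
    proof
      fix w assume w: "w \<in> N v"
      have "(\<Sum>u\<in>N v. W w u * \<theta> u) \<le> (\<Sum>u\<in>U. W w u * \<theta> u)"
        using \<open>N v \<subset> U\<close> w \<theta> unit_weight_graph_nonneg[OF g] psubset.hyps(1)
        by (intro sum_mono2) auto
      then show "(\<Sum>u\<in>N v. W w u * \<theta> u) \<le> 1"
        using packing w \<open>N v \<subset> U\<close> by force
    qed
    ultimately obtain X where X: "X \<subseteq> N v" "indep_set W X"
      and rounded: "(\<Sum>u\<in>N v. \<theta> u * c u) \<le> (\<Sum>u\<in>X. c u)"
      using psubset.IH[of "N v"] unit_weight_graph_subset[OF g] \<theta> c by blast
    have "finite X"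
      using X(1) \<open>N v \<subset> U\<close> psubset.hyps(1) by (meson finite_subset less_imp_le)
    moreover have "v \<notin> X"
      using X(1) not_in_non_neighbours[of v U W] unfolding N_def by blast
    ultimately have "(\<Sum>u\<in>U. \<theta> u * c u) \<le> (\<Sum>u\<in>insert v X. c u)"
      using above_average rounded by simp
    moreover have "insert v X \<subseteq> U"
      using X(1) \<open>N v \<subset> U\<close> v(1) by blast
    ultimately show ?thesis
      using indep_set_insert_non_neighbour[OF g v(1) X[unfolded N_def]] by blast
  qed
qed

lemma stable_indep_set_bound:
  assumes g: "unit_weight_graph V W" and st: "stable V W \<theta>"
  shows "\<exists>X\<subseteq>V. indep_set W X \<and>
           real (card V) - t * (\<Sum>v\<in>V. \<theta> v) \<le> (\<Sum>u\<in>X. closed_degree V W u) - t * real (card X)"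
proof -
  have fin: "finite V"
    using unit_weight_graph_finite[OF g] .
  define c where "c u = closed_degree V W u - t" for u
  define U where "U = {u\<in>V. 0 < \<theta> u \<and> 0 < c u}"
  have "U \<subseteq> V"
    unfolding U_def by auto
  have packing: "\<forall>v\<in>U. (\<Sum>u\<in>U. W v u * \<theta> u) \<le> 1"
  proof
    fix v assume v: "v \<in> U"
    have "(\<Sum>u\<in>U. W v u * \<theta> u) \<le> (\<Sum>u\<in>V. W v u * \<theta> u)"
      using fin \<open>U \<subseteq> V\<close> v unit_weight_graph_nonneg[OF g] stable_nonneg[OF st]
      by (intro sum_mono2) auto
    also have "\<dots> = 1"
      using st v g unfolding stable_iff[OF g] U_def by auto
    finally show "(\<Sum>u\<in>U. W v u * \<theta> u) \<le> 1" .
  qed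
  have "\<forall>u\<in>U. 0 \<le> \<theta> u" "\<forall>u\<in>U. 0 \<le> c u"
    unfolding U_def by auto
  then obtain X where X: "X \<subseteq> U" "indep_set W X"
    and rounded: "(\<Sum>u\<in>U. \<theta> u * c u) \<le> (\<Sum>u\<in>X. c u)"
    using fractional_packing_rounding[OF unit_weight_graph_subset[OF g \<open>U \<subseteq> V\<close>] _ _ packing]
    by blast
  have "real (card V) - t * (\<Sum>v\<in>V. \<theta> v) \<le> (\<Sum>u\<in>V. \<theta> u * c u)"
    using card_le_stable_weighted_degree[OF g st]
    by (simp add: c_def right_diff_distrib sum_subtractf sum_distrib_left sum_distrib_right mult.commute)
  also have "\<dots> \<le> (\<Sum>u\<in>U. \<theta> u * c u)"
  proof -
    have "\<theta> u * c u \<le> 0" if "u \<in> V - U" for u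
      using that stable_nonneg[OF st, of u] unfolding U_def
      by (auto simp: mult_nonneg_nonpos not_less)
    then have "(\<Sum>u\<in>V - U. \<theta> u * c u) \<le> 0"
      by (rule sum_nonpos)
    then show ?thesis
      using sum.subset_diff[OF \<open>U \<subseteq> V\<close> fin, of "\<lambda>u. \<theta> u * c u"] by simp
  qed
  also have "\<dots> \<le> (\<Sum>u\<in>X. closed_degree V W u) - t * real (card X)"
    using rounded by (simp add: c_def sum_subtractf mult.commute)
  finally show ?thesis
    using X \<open>U \<subseteq> V\<close> by blast
qed

section \<open>A random independent set of expected size \<open>OPT_stable\<close>\<close>

lemma finite_sets_separable:
  fixes A B :: "real set"
  assumes "finite A" "finite B" "\<forall>x\<in>A. \<forall>y\<in>B. x < y"
  shows "\<exists>t. (\<forall>x\<in>A. x < t) \<and> (\<forall>y\<in>B. t < y)"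
proof (cases "A = {} \<or> B = {}")
  case True
  define t where "t = (if A = {} then Min (insert 0 B) - 1 else Max (insert 0 A) + 1)"
  have "Min (insert 0 B) \<le> y" if "y \<in> B" for y
    using assms(2) that by simp
  moreover have "x \<le> Max (insert 0 A)" if "x \<in> A" for x
    using assms(1) that by simp
  ultimately have "(\<forall>x\<in>A. x < t) \<and> (\<forall>y\<in>B. t < y)"
    using True unfolding t_def by fastforce
  then show ?thesis ..
next
  case False
  then have "Max A < Min B"
    using assms by (simp add: Max_less_iff Min_gr_iff)
  then have "(\<forall>x\<in>A. x < (Max A + Min B) / 2) \<and> (\<forall>y\<in>B. (Max A + Min B) / 2 < y)"
    using Max_ge[OF assms(1)] Min_le[OF assms(2)] by fastforce
  then show ?thesis ..
qed

lemma diff_mult_Inf_le: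
  fixes C :: "real set"
  assumes "C \<noteq> {}" "bdd_below C" "\<And>y. y \<in> C \<Longrightarrow> a - t * y \<le> M"
  shows "a - t * Inf C \<le> M"
proof (cases "t \<le> 0")
  case True
  obtain y where y: "y \<in> C"
    using assms(1) by blast
  then have "- t * Inf C \<le> - t * y"
    using True cInf_lower[OF y assms(2)] by (intro mult_left_mono) auto
  then show ?thesis
    using assms(3)[OF y] by linarith
next
  case False
  then have "(a - M) / t \<le> Inf C"
    using assms(1,3) by (intro cInf_greatest) (auto simp: field_simps)
  then show ?thesis
    using False by (simp add: field_simps)
qed

text \<open>Read geometrically: if every line of slope \<open>t\<close> through \<open>(z, n)\<close> has one of the
  points \<open>(a X, b X)\<close> on or above it, then some segment between two of these points meets
  the vertical line through \<open>(z, n)\<close> on or above \<open>(z, n)\<close>.\<close>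
lemma mixture_from_linear_bounds:
  fixes a b :: "'x \<Rightarrow> real"
  assumes fin: "finite I" and bound: "\<And>t. \<exists>X\<in>I. n - t * z \<le> b X - t * a X"
  shows "\<exists>X1\<in>I. \<exists>X2\<in>I. \<exists>l. 0 \<le> l \<and> l \<le> 1 \<and>
           l * a X1 + (1 - l) * a X2 = z \<and> n \<le> l * b X1 + (1 - l) * b X2"
proof (rule ccontr)
  assume "\<not> ?thesis"
  then have no_mix:
    "\<not> (0 \<le> l \<and> l \<le> 1 \<and> l * a X1 + (1 - l) * a X2 = z \<and> n \<le> l * b X1 + (1 - l) * b X2)"
    if "X1 \<in> I" "X2 \<in> I" for X1 X2 l
    using that by blast
  have at_z: "b X < n" if "X \<in> I" "a X = z" for X
    using no_mix[OF that(1) that(1), of 1] that(2) by simp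
  have slopes: "(b q - n) / (a q - z) < (n - b p) / (z - a p)"
    if p: "p \<in> I" "a p < z" and q: "q \<in> I" "z < a q" for p q
  proof -
    define l where "l = (a q - z) / (a q - a p)"
    have lD: "l * (a q - a p) = a q - z"
      using p(2) q(2) by (simp add: l_def)
    then have "l * a p + (1 - l) * a q = z"
      by (simp add: algebra_simps)
    moreover have "0 \<le> l" "l \<le> 1"
      using p(2) q(2) by (auto simp: l_def field_simps)
    ultimately have "l * b p + (1 - l) * b q < n"
      using no_mix[OF p(1) q(1), of l] by linarith
    then have "(l * b p + (1 - l) * b q) * (a q - a p) < n * (a q - a p)"
      using p(2) q(2) by (intro mult_strict_right_mono) auto
    moreover have "(l * b p + (1 - l) * b q) * (a q - a p)
        = l * (a q - a p) * b p + ((a q - a p) - l * (a q - a p)) * b q"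
      by (simp add: algebra_simps)
    ultimately have "(z - a p) * (b q - n) < (a q - z) * (n - b p)"
      unfolding lD by (simp add: algebra_simps)
    then show ?thesis
      using p(2) q(2) by (simp add: field_simps)
  qed
  define L where "L = (\<lambda>p. (n - b p) / (z - a p)) ` {p\<in>I. a p < z}"
  define R where "R = (\<lambda>q. (b q - n) / (a q - z)) ` {q\<in>I. z < a q}"
  have "\<exists>t. (\<forall>x\<in>R. x < t) \<and> (\<forall>y\<in>L. t < y)"
    by (rule finite_sets_separable) (use fin slopes in \<open>auto simp: L_def R_def\<close>)
  then obtain t where
    left: "\<And>p. p \<in> I \<Longrightarrow> a p < z \<Longrightarrow> t < (n - b p) / (z - a p)" and
    right: "\<And>q. q \<in> I \<Longrightarrow> z < a q \<Longrightarrow> (b q - n) / (a q - z) < t"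
    unfolding L_def R_def by blast
  obtain X where X: "X \<in> I" "n - t * z \<le> b X - t * a X"
    using bound by blast
  consider "a X < z" | "a X = z" | "z < a X"
    by linarith
  then show False
  proof cases
    case 1
    then show False
      using left[OF X(1) 1] X(2) by (simp add: field_simps)
  next
    case 2
    then show False
      using at_z[OF X(1) 2] X(2) by simp
  next
    case 3
    then show False
      using right[OF X(1) 3] X(2) by (simp add: field_simps)
  qed
qed

lemma OPT_stable_indep_set_bound:
  assumes g: "unit_weight_graph V W"
  shows "\<exists>X\<subseteq>V. indep_set W X \<and>
           real (card V) - t * OPT_stable V W \<le> (\<Sum>u\<in>X. closed_degree V W u) - t * real (card X)"
proof -
  define I where "I = {X. X \<subseteq> V \<and> indep_set W X}"
  define f where "f X = (\<Sum>u\<in>X. closed_degree V W u) - t * real (card X)" for X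
  have "finite I" "{} \<in> I"
    using unit_weight_graph_finite[OF g] by (auto simp: I_def)
  then have "Max (f ` I) \<in> f ` I"
    by (intro Max_in) auto
  then obtain X where X: "X \<in> I" "f X = Max (f ` I)"
    by (metis imageE)
  define C where "C = {(\<Sum>v\<in>V. \<bar>\<theta> v\<bar>) | \<theta>. stable V W \<theta>}"
  have "real (card V) - t * Inf C \<le> f X"
  proof (rule diff_mult_Inf_le)
    show "C \<noteq> {}"
      using exists_stable[OF g] unfolding C_def by blast
    show "bdd_below C"
      unfolding C_def by (rule bdd_belowI[of _ 0]) auto
    fix y assume "y \<in> C"
    then obtain \<theta> where st: "stable V W \<theta>" and "y = (\<Sum>v\<in>V. \<bar>\<theta> v\<bar>)"
      unfolding C_def by blast
    then have y: "y = (\<Sum>v\<in>V. \<theta> v)"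
      using stable_nonneg[OF st] by simp
    obtain Y where Y: "Y \<in> I" "real (card V) - t * y \<le> f Y"
      using stable_indep_set_bound[OF g st, of t] unfolding I_def f_def y by auto
    have "f Y \<le> f X"
      unfolding X(2) using \<open>finite I\<close> Y(1) by (intro Max_ge) auto
    then show "real (card V) - t * y \<le> f X"
      using Y(2) by linarith
  qed
  then show ?thesis
    using X(1) unfolding I_def f_def C_def OPT_stable_def by blast
qed

lemma OPT_stable_random_indep_set:
  assumes g: "unit_weight_graph V W"
  obtains \<D> :: "'v set pmf" where "\<forall>D\<in>set_pmf \<D>. D \<subseteq> V \<and> indep_set W D"
    and "measure_pmf.expectation \<D> (\<lambda>D. real (card D)) = OPT_stable V W"
    and "real (card V) \<le> measure_pmf.expectation \<D> (\<lambda>D. \<Sum>u\<in>D. closed_degree V W u)"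
proof -
  define I where "I = {X. X \<subseteq> V \<and> indep_set W X}"
  have "finite I"
    using unit_weight_graph_finite[OF g] by (simp add: I_def)
  then obtain X1 X2 l where X: "X1 \<in> I" "X2 \<in> I" and l: "0 \<le> l" "l \<le> 1"
    and size: "l * real (card X1) + (1 - l) * real (card X2) = OPT_stable V W"
    and degree: "real (card V)
      \<le> l * (\<Sum>u\<in>X1. closed_degree V W u) + (1 - l) * (\<Sum>u\<in>X2. closed_degree V W u)"
    using mixture_from_linear_bounds[where I = I and n = "real (card V)" and z = "OPT_stable V W"
        and a = "\<lambda>X. real (card X)" and b = "\<lambda>X. \<Sum>u\<in>X. closed_degree V W u"]
      OPT_stable_indep_set_bound[OF g] unfolding I_def by blast
  define \<D> where "\<D> = map_pmf (\<lambda>b. if b then X1 else X2) (bernoulli_pmf l)"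
  have "measure_pmf.expectation \<D> f = l * f X1 + (1 - l) * f X2" for f :: "'v set \<Rightarrow> real"
    unfolding \<D>_def using l by simp
  moreover have "\<forall>D\<in>set_pmf \<D>. D \<subseteq> V \<and> indep_set W D"
    unfolding \<D>_def using X by (auto simp: I_def)
  ultimately show ?thesis
    using that size degree by simp
qed

section \<open>Uniformly random profiles\<close>

lemma profiles_finite: "finite V \<Longrightarrow> finite (profiles V)"
proof -
  assume "finite V"
  moreover have "profiles V \<subseteq> PiE {..<card V} (\<lambda>_. V)"
    unfolding profiles_def PiE_def Pi_def by (auto dest: bij_betw_apply)
  ultimately show ?thesis
    by (auto intro: finite_subset finite_PiE)
qed

lemma profiles_nonempty: "finite V \<Longrightarrow> profiles V \<noteq> {}"
proof -
  assume "finite V"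
  then obtain h where "bij_betw h {..<card V} V"
    using ex_bij_betw_nat_finite by (metis atLeast0LessThan)
  then have "restrict h {..<card V} \<in> profiles V"
    unfolding profiles_def by simp
  then show ?thesis
    by blast
qed

lemma profile_apply_in: "t \<in> profiles V \<Longrightarrow> i < card V \<Longrightarrow> t i \<in> V"
  unfolding profiles_def by (auto dest: bij_betw_apply)

lemma card_profiles_agent_fiber:
  assumes i: "i < card V" and v: "v \<in> V" and w: "w \<in> V"
  shows "card {t\<in>profiles V. t i = v} = card {t\<in>profiles V. t i = w}"
proof (rule bij_betw_same_card)
  define f where "f t = restrict (Transposition.transpose v w \<circ> t) {..<card V}"
    for t :: "nat \<Rightarrow> 'a"
  have in_profiles: "f t \<in> profiles V" if "t \<in> profiles V" for t
  proof -
    have "bij_betw (Transposition.transpose v w) V V"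
      using v w by simp
    then have "bij_betw (Transposition.transpose v w \<circ> t) {..<card V} V"
      using that unfolding profiles_def by (auto intro: bij_betw_trans)
    then show ?thesis
      unfolding profiles_def f_def by simp
  qed
  have involution: "f (f t) = t" if "t \<in> profiles V" for t
    using that unfolding profiles_def f_def by (auto simp: extensional_def)
  have f_apply: "f t i = Transposition.transpose v w (t i)" for t
    using i by (simp add: f_def)
  show "bij_betw f {t\<in>profiles V. t i = v} {t\<in>profiles V. t i = w}"
    by (rule bij_betwI[where g = f]) (auto simp: in_profiles involution f_apply)
qed

lemma map_pmf_profile_apply:
  assumes fin: "finite V" and i: "i < card V"
  shows "map_pmf (\<lambda>t. t i) (pmf_of_set (profiles V)) = pmf_of_set V"
proof (rule pmf_eqI)
  fix v
  define F where "F w = {t\<in>profiles V. t i = w}" for w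
  obtain v0 where v0: "v0 \<in> V"
    using i by fastforce
  then have "V \<noteq> {}"
    by blast
  have "card (profiles V) = (\<Sum>w\<in>V. card (F w))"
    unfolding F_def card_eq_sum
    using profile_apply_in[OF _ i] fin profiles_finite[OF fin]
    by (subst sum.group[symmetric, where g = "\<lambda>t. t i" and T = V]) auto
  also have "\<dots> = card V * card (F v0)"
    using card_profiles_agent_fiber[OF i _ v0] unfolding F_def by simp
  finally have total: "card (profiles V) = card V * card (F v0)" .
  have "card (profiles V) \<noteq> 0"
    using profiles_finite[OF fin] profiles_nonempty[OF fin] by simp
  then have "card (F v0) \<noteq> 0"
    using total by simp
  have preimage: "profiles V \<inter> (\<lambda>t. t i) -` {v} = F v"
    unfolding F_def by auto
  show "pmf (map_pmf (\<lambda>t. t i) (pmf_of_set (profiles V))) v = pmf (pmf_of_set V) v"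
  proof (cases "v \<in> V")
    case True
    then have "card (F v) = card (F v0)"
      using card_profiles_agent_fiber[OF i True v0] unfolding F_def by simp
    then show ?thesis
      using True \<open>card (F v0) \<noteq> 0\<close> \<open>V \<noteq> {}\<close> profiles_finite[OF fin] profiles_nonempty[OF fin] fin
      by (simp add: pmf_map measure_pmf_of_set preimage total)
  next
    case False
    then have "F v = {}"
      using profile_apply_in[OF _ i] unfolding F_def by blast
    then show ?thesis
      using False \<open>V \<noteq> {}\<close> fin profiles_finite[OF fin] profiles_nonempty[OF fin]
      by (simp add: pmf_map measure_pmf_of_set preimage)
  qed
qed

section \<open>Signalling a random independent set\<close>

definition neighbour_load :: "'v set \<Rightarrow> ('v \<Rightarrow> 'v \<Rightarrow> real) \<Rightarrow> 'v \<times> ('v \<Rightarrow> real) \<Rightarrow> real" where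
  "neighbour_load V W = (\<lambda>(v, s). \<Sum>v'\<in>V - {v}. W v v' * s v')"

lemma neighbour_load_apply:
  "neighbour_load V W (v, s) = (\<Sum>v'\<in>V - {v}. W v v' * s v')"
  by (simp add: neighbour_load_def)

lemma integral_cond_pmf:
  fixes f :: "'a \<Rightarrow> real"
  assumes fin: "finite (set_pmf p)" and ne: "set_pmf p \<inter> A \<noteq> {}"
  shows "measure_pmf.expectation (cond_pmf p A) f
           = measure_pmf.expectation p (\<lambda>x. indicator A x * f x) / measure_pmf.prob p A"
proof -
  have "measure_pmf.expectation (cond_pmf p A) f = (\<Sum>x\<in>set_pmf p. f x * pmf (cond_pmf p A) x)"
    using fin ne by (intro integral_measure_pmf_real) auto
  also have "\<dots> = (\<Sum>x\<in>set_pmf p. indicator A x * f x * pmf p x) / measure_pmf.prob p A"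
    by (auto simp: pmf_cond[OF ne] sum_divide_distrib intro!: sum.cong)
  also have "(\<Sum>x\<in>set_pmf p. indicator A x * f x * pmf p x)
      = measure_pmf.expectation p (\<lambda>x. indicator A x * f x)"
    using fin by (intro integral_measure_pmf_real[symmetric]) auto
  finally show ?thesis .
qed

lemma vimage_sig_event: "(\<lambda>(t, s). (t i, s)) -` {(v, s). s v = \<theta>} = sig_event i \<theta>"
  by (auto simp: sig_event_def)

lemma Q_eq_cond_expectation:
  assumes "0 < measure_pmf.prob (joint V \<phi>) (sig_event i \<theta>)"
  shows "Q V W \<phi> i x \<theta> = measure_pmf.expectation
           (cond_pmf (map_pmf (\<lambda>(t, s). (t i, s)) (joint V \<phi>)) {(v, s). s v = \<theta>})
           (\<lambda>y. x + neighbour_load V W y)"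
proof -
  have "set_pmf (joint V \<phi>) \<inter> sig_event i \<theta> \<noteq> {}"
    using assms measure_pmf_zero_iff[of "joint V \<phi>" "sig_event i \<theta>"] by auto
  then have "cond_pmf (map_pmf (\<lambda>(t, s). (t i, s)) (joint V \<phi>)) {(v, s). s v = \<theta>}
      = map_pmf (\<lambda>(t, s). (t i, s)) (cond_pmf (joint V \<phi>) (sig_event i \<theta>))"
    by (rule cond_map_pmf[of "joint V \<phi>" "\<lambda>(t, s). (t i, s)" "{(v, s). s v = \<theta>}",
          unfolded vimage_sig_event])
  then show ?thesis
    unfolding Q_def neighbour_load_def by (simp add: case_prod_unfold)
qed

definition indicator_scheme :: "'v set \<Rightarrow> 'v set pmf \<Rightarrow> (nat \<Rightarrow> 'v) \<Rightarrow> ('v \<Rightarrow> real) pmf" where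
  "indicator_scheme V \<D> = (\<lambda>_. map_pmf (\<lambda>D. restrict (indicator D) V) \<D>)"

definition type_signal_pmf :: "'v set \<Rightarrow> 'v set pmf \<Rightarrow> ('v \<times> ('v \<Rightarrow> real)) pmf" where
  "type_signal_pmf V \<D> = pmf_of_set V \<bind> (\<lambda>v. map_pmf (\<lambda>D. (v, restrict (indicator D) V)) \<D>)"

lemma map_pmf_joint_indicator_scheme:
  assumes "finite V" "i < card V"
  shows "map_pmf (\<lambda>(t, s). (t i, s)) (joint V (indicator_scheme V \<D>)) = type_signal_pmf V \<D>"
proof -
  have "map_pmf (\<lambda>(t, s). (t i, s)) (joint V (indicator_scheme V \<D>))
      = map_pmf (\<lambda>t. t i) (pmf_of_set (profiles V))
          \<bind> (\<lambda>v. map_pmf (\<lambda>D. (v, restrict (indicator D) V)) \<D>)"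
    by (simp add: joint_def indicator_scheme_def map_bind_pmf map_pmf_comp bind_map_pmf)
  then show ?thesis
    unfolding type_signal_pmf_def map_pmf_profile_apply[OF assms] .
qed

lemma set_type_signal_pmf:
  assumes "finite V" "V \<noteq> {}"
  shows "set_pmf (type_signal_pmf V \<D>) = (\<lambda>(v, D). (v, restrict (indicator D) V)) ` (V \<times> set_pmf \<D>)"
  using assms by (auto simp: type_signal_pmf_def)

lemma finite_set_type_signal_pmf:
  assumes "finite V" "\<forall>D\<in>set_pmf \<D>. D \<subseteq> V"
  shows "finite (set_pmf \<D>)" "V \<noteq> {} \<Longrightarrow> finite (set_pmf (type_signal_pmf V \<D>))"
proof -
  show "finite (set_pmf \<D>)"
    using assms by (auto intro: finite_subset[of _ "Pow V"])
  then show "V \<noteq> {} \<Longrightarrow> finite (set_pmf (type_signal_pmf V \<D>))"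
    using assms(1) by (simp add: set_type_signal_pmf)
qed

lemma expectation_type_signal_pmf:
  fixes F :: "'v \<times> ('v \<Rightarrow> real) \<Rightarrow> real"
  assumes "finite V" "V \<noteq> {}" "finite (set_pmf \<D>)"
  shows "measure_pmf.expectation (type_signal_pmf V \<D>) F
           = measure_pmf.expectation \<D> (\<lambda>D. \<Sum>v\<in>V. F (v, restrict (indicator D) V)) / card V"
proof -
  have "measure_pmf.expectation (type_signal_pmf V \<D>) F
      = (\<Sum>v\<in>V. measure_pmf.expectation \<D> (\<lambda>D. F (v, restrict (indicator D) V))) / card V"
    unfolding type_signal_pmf_def using assms
    by (subst pmf_expectation_bind_pmf_of_set)
      (auto simp: sum_divide_distrib divide_inverse_commute sum_distrib_left)
  also have "(\<Sum>v\<in>V. measure_pmf.expectation \<D> (\<lambda>D. F (v, restrict (indicator D) V)))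
      = measure_pmf.expectation \<D> (\<lambda>D. \<Sum>v\<in>V. F (v, restrict (indicator D) V))"
    using assms(3)
    by (subst Bochner_Integration.integral_sum) (auto intro: integrable_measure_pmf_finite)
  finally show ?thesis .
qed

lemma sum_outside_indep_set:
  assumes g: "unit_weight_graph V W" and D: "D \<subseteq> V" "indep_set W D"
  shows "(\<Sum>v\<in>V - D. (\<Sum>u\<in>D. W v u) - 1) = (\<Sum>u\<in>D. closed_degree V W u) - card V"
proof -
  have fin: "finite V" "finite D"
    using unit_weight_graph_finite[OF g] D(1) finite_subset by auto
  have "(\<Sum>v\<in>V - D. \<Sum>u\<in>D. W v u) = (\<Sum>u\<in>D. \<Sum>v\<in>V - D. W u v)"
    using D(1) unit_weight_graph_sym[OF g] by (subst sum.swap) (auto intro!: sum.cong)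
  also have "\<dots> = (\<Sum>u\<in>D. closed_degree V W u - 1)"
  proof (rule sum.cong[OF refl])
    fix u assume u: "u \<in> D"
    then have "(\<Sum>v\<in>D. W u v) = 1"
      using sum_indep_set_self[OF D(2) fin(2)] unit_weight_graph_diag[OF g] D(1) by blast
    then show "(\<Sum>v\<in>V - D. W u v) = closed_degree V W u - 1"
      unfolding closed_degree_def using fin(1) D(1) by (simp add: sum_diff)
  qed
  finally show ?thesis
    using fin D(1) by (simp add: sum_subtractf card_Diff_subset of_nat_diff card_mono)
qed

lemma neighbour_load_indicator:
  assumes D: "D \<subseteq> V" "indep_set W D" and fin: "finite V" and v: "v \<in> V"
  shows "neighbour_load V W (v, restrict (indicator D) V) = (if v \<in> D then 0 else (\<Sum>u\<in>D. W v u))"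
proof -
  have "neighbour_load V W (v, restrict (indicator D) V) = (\<Sum>u\<in>V - {v}. W v u * indicator D u)"
    unfolding neighbour_load_apply by (auto intro: sum.cong)
  also have "\<dots> = (\<Sum>u\<in>(V - {v}) \<inter> D. W v u)"
    using fin by (intro Indicator_Function.sum_mult_indicator) simp
  also have "\<dots> = (if v \<in> D then 0 else (\<Sum>u\<in>D. W v u))"
    using D unfolding indep_set_def by (auto intro!: sum.neutral arg_cong[where f = "sum _"])
  finally show ?thesis .
qed

lemma cond_expectation_load_signal_one:
  assumes g: "unit_weight_graph V W" and "V \<noteq> {}"
    and indep: "\<forall>D\<in>set_pmf \<D>. D \<subseteq> V \<and> indep_set W D"
    and ne: "set_pmf (type_signal_pmf V \<D>) \<inter> {(v, s). s v = 1} \<noteq> {}"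
  shows "measure_pmf.expectation (cond_pmf (type_signal_pmf V \<D>) {(v, s). s v = 1})
           (neighbour_load V W) = 0"
proof -
  have "neighbour_load V W y = 0"
    if y_in: "y \<in> set_pmf (cond_pmf (type_signal_pmf V \<D>) {(v, s). s v = 1})" for y
  proof -
    obtain v D where y: "y = (v, restrict (indicator D) V)" "v \<in> V" "D \<in> set_pmf \<D>"
      and signal: "restrict (indicator D) V v = (1::real)"
      using y_in unfolding set_cond_pmf[OF ne]
      by (auto simp: set_type_signal_pmf[OF unit_weight_graph_finite[OF g] \<open>V \<noteq> {}\<close>])
    then have "v \<in> D"
      by (simp add: indicator_def split: if_splits)
    then show ?thesis
      using neighbour_load_indicator[OF _ _ unit_weight_graph_finite[OF g] y(2)] indep y by simp
  qed
  then show ?thesis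
    by (subst integral_cong_AE[where g = "\<lambda>_. 0"]) (auto simp: AE_measure_pmf_iff)
qed

lemma cond_expectation_load_signal_zero:
  assumes g: "unit_weight_graph V W" and "V \<noteq> {}"
    and indep: "\<forall>D\<in>set_pmf \<D>. D \<subseteq> V \<and> indep_set W D"
    and degree: "real (card V) \<le> measure_pmf.expectation \<D> (\<lambda>D. \<Sum>u\<in>D. closed_degree V W u)"
    and ne: "set_pmf (type_signal_pmf V \<D>) \<inter> {(v, s). s v = 0} \<noteq> {}"
  shows "1 \<le> measure_pmf.expectation (cond_pmf (type_signal_pmf V \<D>) {(v, s). s v = 0})
               (neighbour_load V W)"
proof -
  define q where "q = type_signal_pmf V \<D>"
  define A :: "('a \<times> ('a \<Rightarrow> real)) set" where "A = {(v, s). s v = 0}"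
  have fin: "finite V"
    using unit_weight_graph_finite[OF g] .
  have fin_\<D>: "finite (set_pmf \<D>)"
    using finite_set_type_signal_pmf(1)[OF fin] indep by blast
  have fin_q: "finite (set_pmf q)"
    unfolding q_def using finite_set_type_signal_pmf(2)[OF fin _ \<open>V \<noteq> {}\<close>] indep by blast
  have ne_q: "set_pmf q \<inter> A \<noteq> {}"
    using ne unfolding q_def A_def .
  have outside: "(\<Sum>v\<in>V. indicator A (v, restrict (indicator D) V) *
                   (neighbour_load V W (v, restrict (indicator D) V) - 1))
               = (\<Sum>u\<in>D. closed_degree V W u) - card V" if "D \<in> set_pmf \<D>" for D
  proof -
    have "D \<subseteq> V" "indep_set W D"
      using indep that by auto
    then have "(\<Sum>v\<in>V. indicator A (v, restrict (indicator D) V) *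
                   (neighbour_load V W (v, restrict (indicator D) V) - 1))
             = (\<Sum>v\<in>V. if v \<in> V - D then (\<Sum>u\<in>D. W v u) - 1 else 0)"
      using neighbour_load_indicator[OF _ _ fin] by (intro sum.cong) (auto simp: A_def)
    also have "\<dots> = (\<Sum>v\<in>V - D. (\<Sum>u\<in>D. W v u) - 1)"
      using fin by (intro sum.mono_neutral_cong_right) auto
    also have "\<dots> = (\<Sum>u\<in>D. closed_degree V W u) - card V"
      by (rule sum_outside_indep_set[OF g \<open>D \<subseteq> V\<close> \<open>indep_set W D\<close>])
    finally show ?thesis .
  qed
  have "measure_pmf.expectation q (\<lambda>y. indicator A y * (neighbour_load V W y - 1))
      = measure_pmf.expectation \<D> (\<lambda>D. (\<Sum>u\<in>D. closed_degree V W u) - card V) / card V"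
    unfolding q_def using fin \<open>V \<noteq> {}\<close> fin_\<D> outside
    by (subst expectation_type_signal_pmf) (auto intro!: integral_cong_AE simp: AE_measure_pmf_iff)
  also have "\<dots> \<ge> 0"
    using degree fin_\<D> indep by (simp add: integrable_measure_pmf_finite)
  finally have "0 \<le> measure_pmf.expectation (cond_pmf q A) (\<lambda>y. neighbour_load V W y - 1)"
    using integral_cond_pmf[OF fin_q ne_q] by simp
  also have "\<dots> = measure_pmf.expectation (cond_pmf q A) (neighbour_load V W) - 1"
    using fin_q ne_q by (simp add: integrable_measure_pmf_finite)
  finally show ?thesis
    unfolding q_def A_def by simp
qed

lemma persuasive_indicator_scheme:
  assumes g: "unit_weight_graph V W"
    and indep: "\<forall>D\<in>set_pmf \<D>. D \<subseteq> V \<and> indep_set W D"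
    and degree: "real (card V) \<le> measure_pmf.expectation \<D> (\<lambda>D. \<Sum>u\<in>D. closed_degree V W u)"
  shows "persuasive V W {0, 1} (indicator_scheme V \<D>)"
  unfolding persuasive_def
proof (intro allI impI ballI)
  fix i \<theta> assume i: "i < card V" and \<theta>: "\<theta> \<in> {0::real, 1}"
    and pos: "0 < measure_pmf.prob (joint V (indicator_scheme V \<D>)) (sig_event i \<theta>)"
  have fin: "finite V" and "V \<noteq> {}"
    using unit_weight_graph_finite[OF g] i by auto
  define q where "q = type_signal_pmf V \<D>"
  define e where "e = measure_pmf.expectation (cond_pmf q {(v, s). s v = \<theta>}) (neighbour_load V W)"
  have view: "map_pmf (\<lambda>(t, s). (t i, s)) (joint V (indicator_scheme V \<D>)) = q"
    unfolding q_def using map_pmf_joint_indicator_scheme[OF fin i] .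
  have "0 < measure_pmf.prob q {(v, s). s v = \<theta>}"
    using pos unfolding view[symmetric] measure_map_pmf vimage_sig_event .
  then have ne: "set_pmf q \<inter> {(v, s). s v = \<theta>} \<noteq> {}"
    using measure_pmf_zero_iff[of q "{(v, s). s v = \<theta>}"] by auto
  have "finite (set_pmf q)"
    unfolding q_def using finite_set_type_signal_pmf(2)[OF fin _ \<open>V \<noteq> {}\<close>] indep by blast
  then have Q: "Q V W (indicator_scheme V \<D>) i x \<theta> = x + e" for x
    using ne unfolding Q_eq_cond_expectation[OF pos] view e_def
    by (simp add: integrable_measure_pmf_finite)
  have "(\<theta> = 1 \<and> e = 0) \<or> (\<theta> = 0 \<and> 1 \<le> e)"
  proof (cases "\<theta> = 1")
    case True
    show ?thesis
      using cond_expectation_load_signal_one[OF g \<open>V \<noteq> {}\<close> indep ne[unfolded True q_def]] True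
      unfolding e_def q_def by simp
  next
    case False
    then have "\<theta> = 0"
      using \<theta> by simp
    then show ?thesis
      using cond_expectation_load_signal_zero[OF g \<open>V \<noteq> {}\<close> indep degree]
        ne[unfolded \<open>\<theta> = 0\<close> q_def]
      unfolding e_def q_def by simp
  qed
  then show "1 \<le> Q V W (indicator_scheme V \<D>) i \<theta> \<theta> \<and>
      \<theta> = (LEAST x. 0 \<le> x \<and> 1 \<le> Q V W (indicator_scheme V \<D>) i x \<theta>)"
    unfolding Q least_threshold by auto
qed

lemma valid_indicator_scheme: "valid_scheme V {0, 1} (indicator_scheme V \<D>)"
  unfolding valid_scheme_def indicator_scheme_def by (auto simp: restrict_PiE_iff indicator_def)

lemma cost_indicator_scheme:
  assumes "finite V" "\<forall>D\<in>set_pmf \<D>. D \<subseteq> V"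
  shows "cost V (indicator_scheme V \<D>) = measure_pmf.expectation \<D> (\<lambda>D. real (card D))"
proof -
  have signal:
    "map_pmf snd (joint V (indicator_scheme V \<D>)) = map_pmf (\<lambda>D. restrict (indicator D) V) \<D>"
    by (simp add: joint_def indicator_scheme_def map_bind_pmf map_pmf_comp)
  have "cost V (indicator_scheme V \<D>)
      = measure_pmf.expectation (map_pmf snd (joint V (indicator_scheme V \<D>))) (\<lambda>s. \<Sum>v\<in>V. \<bar>s v\<bar>)"
    unfolding cost_def case_prod_unfold by simp
  also have "\<dots> = measure_pmf.expectation \<D> (\<lambda>D. \<Sum>v\<in>V. \<bar>restrict (indicator D) V v\<bar>)"
    unfolding signal by simp
  also have "\<dots> = measure_pmf.expectation \<D> (\<lambda>D. real (card D))"
  proof (rule integral_cong_AE)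
    show "AE D in \<D>. (\<Sum>v\<in>V. \<bar>restrict (indicator D) V v\<bar>) = real (card D)"
    proof (rule AE_pmfI)
      fix D assume "D \<in> set_pmf \<D>"
      then have "D \<subseteq> V"
        using assms(2) by blast
      have "(\<Sum>v\<in>V. \<bar>restrict (indicator D) V v\<bar>) = (\<Sum>v\<in>V. indicator D v :: real)"
        by (intro sum.cong) (auto simp: indicator_def)
      then show "(\<Sum>v\<in>V. \<bar>restrict (indicator D) V v\<bar>) = real (card D)"
        using assms(1) \<open>D \<subseteq> V\<close> by (simp add: indicator_def sum.If_cases Int_absorb1)
    qed
  qed simp_all
  finally show ?thesis .
qed

theorem theorem5p5:
  fixes V :: "'v set" and W :: "'v \<Rightarrow> 'v \<Rightarrow> real"
  assumes "unit_weight_graph V W"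
  shows "\<exists>(S::real set) \<phi>. valid_scheme V S \<phi> \<and> card S = 2 \<and> persuasive V W S \<phi> \<and>
           cost V \<phi> = OPT_stable V W"
proof -
  obtain \<D> where indep: "\<forall>D\<in>set_pmf \<D>. D \<subseteq> V \<and> indep_set W D"
    and size: "measure_pmf.expectation \<D> (\<lambda>D. real (card D)) = OPT_stable V W"
    and degree: "real (card V) \<le> measure_pmf.expectation \<D> (\<lambda>D. \<Sum>u\<in>D. closed_degree V W u)"
    using OPT_stable_random_indep_set[OF assms] .
  have "cost V (indicator_scheme V \<D>) = OPT_stable V W"
    using cost_indicator_scheme[OF unit_weight_graph_finite[OF assms]] indep size by simp
  moreover have "card {0::real, 1} = 2"
    by simp
  ultimately show ?thesis
    using valid_indicator_scheme persuasive_indicator_scheme[OF assms indep degree] by blast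
qed

end
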